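(* Let $M\subset\mathbb R^n$ be the closure of a bounded domain with $C^1$ boundary $\partial M$, with outward unit normal $\nu(x)$ at $x\in\partial M$, and let $x_1,\dots,x_n$ be the standard coordinates. Fix $T>0$ and $m\ge1$. Let $\phi=(\phi_1,\dots,\phi_m):[0,T]\times M\times\mathbb R^m\to\mathbb R^m$ be such that every compact $U\subset\mathbb R^m$ admits $C_\phi(U)>0$ with $\|\phi(t,x,v_1)-\phi(t,x,v_2)\|\le C_\phi(U)\|v_1-v_2\|$ for all $t\in(0,T)$, $x\in M$, $v_1,v_2\in U$. Let $\zeta_1,\dots,\zeta_n$ be real-valued functions on $[0,T]\times M$. Let $f=(f_1,\dots,f_m)$, where each $f_i(t,x)$ is real-valued, continuous in $t\in[0,T]$, continuously differentiable in $t\in(0,T)$ and twice continuously differentiable in $x\in M$, and satisfies for every $i=1,\dots,m$ $$\frac{\partial}{\partial t}f_i(t,x)=\sum_{j=1}^n\frac{\partial^2}{\partial x_j^2}f_i(t,x)+\sum_{j=1}^n\zeta_j(t,x)\frac{\partial}{\partial x_j}f_i(t,x)+\phi_i(t,x,f(t,x))\quad\text{on }(0,T)\times M.$$ Let $W\subset\mathbb R^m$ be a nonempty closed convex set. Suppose (1) $f(0,x)\in W$ for all $x\in M$, and (2) $\langle\lambda,\phi(t,x,\omega)\rangle\le0$ for all $(t,x,\omega)\in(0,T)\times M\times\partial W$ and every supporting vector $\lambda\in S_\omega W$. If $f(t,x)\notin W$ for some $(t,x)\in(0,T]\times M$, then there exists a maximal distance pair $(t_0,x_0)\in(0,T)\times\partial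 M$ such that $$\frac{\partial}{\partial\nu}\left\langle\lambda(f(t_0,x_0)),f(t_0,x)\right\rangle\Big|_{x=x_0}>0.$$
   Context: $\langle\cdot,\cdot\rangle$ and $\|\cdot\|$ are the standard Euclidean inner product and norm on $\mathbb R^m$; $\frac{\partial}{\partial\nu}$ denotes differentiation in $x$ in the direction $\nu(x)$. For $\omega\in\partial W$, a supporting vector for $W$ at $\omega$ is $\lambda\in\mathbb R^m$ with $\|\lambda\|=1$ and $\langle\lambda,\sigma\rangle\le\langle\lambda,\omega\rangle$ for all $\sigma\in W$; $S_\omega W$ is the set of these. $\operatorname{dist}_Wv$ is the Euclidean distance from $v\in\mathbb R^m$ to $W$, $\omega(v)$ the unique point of $W$ closest to $v$, and $\lambda(v)=v-\omega(v)$. A pair $(t,x)\in[0,T]\times M$ is a maximal distance pair if $\operatorname{dist}_Wf(t,x)=\sup_{y\in M}\operatorname{dist}_Wf(t,y)>0$. *)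

theory Defs
  imports "HOL-Analysis.Analysis"
begin

definition C1_domain_with_normal :: "(real^'n) set \<Rightarrow> (real^'n \<Rightarrow> real^'n) \<Rightarrow> bool" where
  "C1_domain_with_normal \<Omega> \<nu> \<longleftrightarrow>
     open \<Omega> \<and> connected \<Omega> \<and> bounded \<Omega> \<and> \<Omega> \<noteq> {} \<and>
     (\<forall>p\<in>frontier \<Omega>. \<exists>U \<rho> g. open U \<and> p \<in> U \<and>
        (\<forall>y\<in>U. (\<rho> has_derivative (\<lambda>h. g y \<bullet> h)) (at y)) \<and>
        continuous_on U g \<and> (\<forall>y\<in>U. g y \<noteq> 0) \<and>
        \<Omega> \<inter> U = {y\<in>U. \<rho> y < 0} \<and>
        \<nu> p = (1 / norm (g p)) *\<^sub>R g p)"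

definition supporting_vectors :: "('a::real_inner) set \<Rightarrow> 'a \<Rightarrow> 'a set" where
  "supporting_vectors W \<omega> = {l. norm l = 1 \<and> (\<forall>\<sigma>\<in>W. l \<bullet> \<sigma> \<le> l \<bullet> \<omega>)}"

definition lam_vec :: "('a::euclidean_space) set \<Rightarrow> 'a \<Rightarrow> 'a" where
  "lam_vec W v = v - closest_point W v"

definition max_distance_pair ::
  "('a::euclidean_space) set \<Rightarrow> 'b set \<Rightarrow> real \<Rightarrow> (real \<Rightarrow> 'b \<Rightarrow> 'a) \<Rightarrow> real \<Rightarrow> 'b \<Rightarrow> bool" where
  "max_distance_pair W M T f t x \<longleftrightarrow> t \<in> {0..T} \<and> x \<in> M \<and>
     infdist (f t x) W = (SUP y\<in>M. infdist (f t y) W) \<and> infdist (f t x) W > 0"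

end

theory Submission
  imports Defs
begin

text \<open>Suppose no boundary pair as claimed exists. Let \<open>C\<close> be a Lipschitz constant of \<open>\<phi>\<close> on a
  compact set containing the values of \<open>f\<close> and their projections onto \<open>W\<close>; choose \<open>t1 < T\<close> at
  which \<open>f\<close> is already outside \<open>W\<close>, and maximise \<open>exp (-(C + 1) t) dist (f t x, W)\<close> over
  \<open>[0, t1] \<times> M\<close>. At a maximiser \<open>(\<tau>, x0)\<close>, with \<open>l = \<lambda>(f \<tau> x0)\<close>, the function
  \<open>x \<mapsto> \<langle>l, f \<tau> x\<rangle>\<close> is maximal over \<open>M\<close> at \<open>x0\<close>. Every direction pointing strictly into
  a halfspace is then a direction of nonincrease (at a boundary point the halfspace is the one
  bounded by the normal, whose derivative is nonpositive by assumption), which forces a vanishing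
  gradient and nonpositive pure second derivatives. The equation, the tangency condition at the
  projection \<open>\<omega>\<close> and the Lipschitz bound then give \<open>\<langle>l, \<partial>\<^sub>t f\<rangle> \<le> C |l|\<^sup>2\<close>, while
  maximality in time gives \<open>\<langle>l, \<partial>\<^sub>t f\<rangle> \<ge> (C + 1) |l|\<^sup>2\<close>.\<close>

section \<open>Maxima along feasible directions\<close>

definition feasible_direction :: "'a::real_vector set \<Rightarrow> 'a \<Rightarrow> 'a \<Rightarrow> bool" where
  "feasible_direction M x h \<longleftrightarrow> (\<exists>\<delta>>0. \<forall>s\<in>{0..<\<delta>}. x + s *\<^sub>R h \<in> M)"

lemma feasible_direction_interior:
  fixes x h :: "'a::real_normed_vector"
  assumes "x \<in> interior M"
  shows "feasible_direction M x h"
proof -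
  obtain e where e: "e > 0" "ball x e \<subseteq> M"
    using assms mem_interior by blast
  have pos: "norm h + 1 > 0"
    by (simp add: add_nonneg_pos)
  have "x + s *\<^sub>R h \<in> M" if s: "0 \<le> s" "s < e / (norm h + 1)" for s
  proof -
    have "norm (s *\<^sub>R h) \<le> s * (norm h + 1)"
      using s by (simp add: distrib_left)
    also have "\<dots> < e"
      using s pos by (simp add: pos_less_divide_eq)
    finally show ?thesis
      using e by (auto simp: dist_norm)
  qed
  then show ?thesis
    unfolding feasible_direction_def using e pos by (intro exI[of _ "e / (norm h + 1)"]) auto
qed

lemma has_real_derivative_along_line:
  fixes \<psi> :: "'a::real_normed_vector \<Rightarrow> real"
  assumes "(\<psi> has_derivative D) (at (x + s *\<^sub>R h) within M)"
    and "\<forall>r\<in>S. x + r *\<^sub>R h \<in> M"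
  shows "((\<lambda>r. \<psi> (x + r *\<^sub>R h)) has_real_derivative D h) (at s within S)"
proof -
  have line: "((\<lambda>r. x + r *\<^sub>R h) has_derivative (\<lambda>u. u *\<^sub>R h)) (at s within S)"
    by (auto intro!: derivative_eq_intros)
  have "(\<psi> has_derivative D) (at (x + s *\<^sub>R h) within (\<lambda>r. x + r *\<^sub>R h) ` S)"
    using assms by (auto intro: has_derivative_subset)
  from has_derivative_in_compose[OF line this]
  have "((\<lambda>r. \<psi> (x + r *\<^sub>R h)) has_derivative (\<lambda>u. D (u *\<^sub>R h))) (at s within S)" .
  moreover have "(\<lambda>u. D (u *\<^sub>R h)) = (\<lambda>u. D h * u)"
    using has_derivative_linear[OF assms(1)] by (auto simp: linear_scale)
  ultimately show ?thesis
    unfolding has_field_derivative_def by simp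
qed

lemma derivative_nonpos_at_max_feasible_direction:
  fixes \<psi> :: "'a::real_normed_vector \<Rightarrow> real"
  assumes "x0 \<in> M" and max: "\<forall>x\<in>M. \<psi> x \<le> \<psi> x0"
    and deriv: "(\<psi> has_derivative D) (at x0 within M)"
    and "feasible_direction M x0 h"
  shows "D h \<le> 0"
proof (rule ccontr)
  assume "\<not> D h \<le> 0"
  obtain \<delta> where \<delta>: "\<delta> > 0" "\<forall>s\<in>{0..<\<delta>}. x0 + s *\<^sub>R h \<in> M"
    using assms(4) unfolding feasible_direction_def by blast
  have "((\<lambda>s. \<psi> (x0 + s *\<^sub>R h)) has_real_derivative D h) (at 0 within {0..<\<delta>})"
    using deriv \<delta> by (intro has_real_derivative_along_line) auto
  from has_real_derivative_pos_inc_right[OF this] \<open>\<not> D h \<le> 0\<close>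
  obtain d where "d > 0" "\<forall>s>0. s < \<delta> \<longrightarrow> s < d \<longrightarrow> \<psi> x0 < \<psi> (x0 + s *\<^sub>R h)"
    by auto
  then have "\<psi> x0 < \<psi> (x0 + (min d \<delta> / 2) *\<^sub>R h)" and "x0 + (min d \<delta> / 2) *\<^sub>R h \<in> M"
    using \<delta> by auto
  then show False
    using max by fastforce
qed

text \<open>The first-order term vanishes, so the mean value theorem on the segment lets the
  sign of the second derivative at \<open>x0\<close> propagate to the increments of \<open>\<psi>\<close>.\<close>
lemma second_derivative_nonpos_at_max_feasible_direction:
  fixes \<psi> :: "'a::real_normed_vector \<Rightarrow> real"
  assumes "x0 \<in> M" and max: "\<forall>x\<in>M. \<psi> x \<le> \<psi> x0"
    and deriv: "\<And>y. y \<in> M \<Longrightarrow> (\<psi> has_derivative D y) (at y within M)"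
    and deriv2: "((\<lambda>y. D y h) has_derivative Q) (at x0 within M)"
    and crit: "D x0 h = 0"
    and "feasible_direction M x0 h"
  shows "Q h \<le> 0"
proof (rule ccontr)
  assume "\<not> Q h \<le> 0"
  obtain \<delta> where \<delta>: "\<delta> > 0" "\<forall>s\<in>{0..<\<delta>}. x0 + s *\<^sub>R h \<in> M"
    using assms(6) unfolding feasible_direction_def by blast
  have "((\<lambda>s. D (x0 + s *\<^sub>R h) h) has_real_derivative Q h) (at 0 within {0..<\<delta>})"
    using deriv2 \<delta> by (intro has_real_derivative_along_line) auto
  from has_real_derivative_pos_inc_right[OF this] \<open>\<not> Q h \<le> 0\<close> crit
  obtain d where d: "d > 0" "\<forall>r>0. r < \<delta> \<longrightarrow> r < d \<longrightarrow> 0 < D (x0 + r *\<^sub>R h) h"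
    by auto
  define s where "s = min d \<delta> / 2"
  have s: "0 < s" "s < \<delta>" "s < d"
    using d \<delta> by (auto simp: s_def)
  have "\<exists>r\<in>{0<..<s}. \<psi> (x0 + s *\<^sub>R h) - \<psi> (x0 + 0 *\<^sub>R h) = D (x0 + r *\<^sub>R h) h * (s - 0)"
  proof (rule mvt_simple)
    fix r assume "0 \<le> r" "r \<le> s"
    then have "((\<lambda>r. \<psi> (x0 + r *\<^sub>R h)) has_real_derivative D (x0 + r *\<^sub>R h) h) (at r within {0..s})"
      using deriv \<delta> s by (intro has_real_derivative_along_line[where M = M]) auto
    then show "((\<lambda>r. \<psi> (x0 + r *\<^sub>R h)) has_derivative (\<lambda>u. D (x0 + r *\<^sub>R h) h * u)) (at r within {0..s})"
      by (simp add: has_field_derivative_def)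
  qed (use s in auto)
  then obtain r where "0 < r" "r < s" "\<psi> (x0 + s *\<^sub>R h) - \<psi> x0 = D (x0 + r *\<^sub>R h) h * s"
    by auto
  moreover have "0 < D (x0 + r *\<^sub>R h) h"
    using d s \<open>0 < r\<close> \<open>r < s\<close> by auto
  ultimately have "\<psi> x0 < \<psi> (x0 + s *\<^sub>R h)"
    using s by (simp add: algebra_simps)
  moreover have "x0 + s *\<^sub>R h \<in> M"
    using \<delta> s by auto
  ultimately show False
    using max by fastforce
qed

lemma gradient_eq_0_at_max_feasible_halfspace:
  fixes \<psi> :: "'a::real_inner \<Rightarrow> real"
  assumes "x0 \<in> M" and max: "\<forall>x\<in>M. \<psi> x \<le> \<psi> x0"
    and deriv: "(\<psi> has_derivative (\<lambda>h. g \<bullet> h)) (at x0 within M)"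
    and n: "norm n = 1" "g \<bullet> n \<le> 0"
    and feasible: "\<And>h. h \<bullet> n < 0 \<Longrightarrow> feasible_direction M x0 h"
  shows "g = 0"
proof -
  have nn: "n \<bullet> n = 1"
    using n by (simp add: norm_eq_1)
  have bound: "g \<bullet> v \<le> (v \<bullet> n + 1) * (g \<bullet> n)" for v
  proof -
    have "(v - (v \<bullet> n + 1) *\<^sub>R n) \<bullet> n < 0"
      using nn by (simp add: algebra_simps)
    then have "g \<bullet> (v - (v \<bullet> n + 1) *\<^sub>R n) \<le> 0"
      using derivative_nonpos_at_max_feasible_direction[OF assms(1) max deriv feasible] by blast
    then show ?thesis
      by (simp add: algebra_simps)
  qed
  have "g \<bullet> n = 0"
    using bound[of g] bound[of "- g"] n by (simp add: algebra_simps)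
  then have "g \<bullet> g \<le> 0"
    using bound[of g] by simp
  then show ?thesis
    by (metis inner_gt_zero_iff not_le)
qed

text \<open>Directions tangent to the halfspace are reached as limits of strictly inward ones.\<close>
lemma even_nonpos_on_open_halfspace_nonpos:
  fixes Q :: "'a::real_inner \<Rightarrow> real"
  assumes cont: "continuous_on UNIV Q" and even: "\<And>h. Q (- h) = Q h" and "n \<noteq> 0"
    and halfspace: "\<And>h. h \<bullet> n < 0 \<Longrightarrow> Q h \<le> 0"
  shows "Q h \<le> 0"
proof (cases "h \<bullet> n > 0")
  case True
  then show ?thesis
    using even halfspace[of "- h"] by simp
next
  case False
  have "((\<lambda>\<epsilon>. Q (h - \<epsilon> *\<^sub>R n)) \<longlongrightarrow> Q (h - 0 *\<^sub>R n)) (at_right 0)"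
    using cont by (intro continuous_on_tendsto_compose[of UNIV Q]) (auto intro!: tendsto_eq_intros)
  moreover have "\<forall>\<^sub>F \<epsilon> in at_right 0. Q (h - \<epsilon> *\<^sub>R n) \<le> 0"
    using eventually_at_right_less
  proof (rule eventually_mono)
    fix \<epsilon> :: real
    assume "0 < \<epsilon>"
    then have "0 < \<epsilon> * (n \<bullet> n)"
      using \<open>n \<noteq> 0\<close> by simp
    then have "(h - \<epsilon> *\<^sub>R n) \<bullet> n < 0"
      unfolding inner_diff_left inner_scaleR_left using False by linarith
    then show "Q (h - \<epsilon> *\<^sub>R n) \<le> 0"
      by (rule halfspace)
  qed
  ultimately show ?thesis
    using tendsto_upperbound by fastforce
qed

lemma hessian_diag_nonpos_at_max_feasible_halfspace:
  fixes \<psi> :: "real^'n \<Rightarrow> real"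
  assumes "x0 \<in> M" and max: "\<forall>x\<in>M. \<psi> x \<le> \<psi> x0"
    and deriv: "\<And>y. y \<in> M \<Longrightarrow> (\<psi> has_derivative (\<lambda>h. G y \<bullet> h)) (at y within M)"
    and deriv2: "\<And>j. ((\<lambda>y. G y $ j) has_derivative (\<lambda>h. \<Sum>k\<in>UNIV. h $ k * H j k)) (at x0 within M)"
    and crit: "G x0 = 0"
    and "n \<noteq> 0" and feasible: "\<And>h. h \<bullet> n < 0 \<Longrightarrow> feasible_direction M x0 h"
  shows "H i i \<le> 0"
proof -
  define Q where "Q h = (\<Sum>j\<in>UNIV. (\<Sum>k\<in>UNIV. h $ k * H j k) * h $ j)" for h :: "real^'n"
  have dQ: "((\<lambda>y. G y \<bullet> h) has_derivative (\<lambda>v. \<Sum>j\<in>UNIV. (\<Sum>k\<in>UNIV. v $ k * H j k) * h $ j))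
      (at x0 within M)" for h
    unfolding inner_vec_def inner_real_def by (auto intro!: derivative_eq_intros deriv2)
  have "Q h \<le> 0" if "h \<bullet> n < 0" for h
    unfolding Q_def
    by (rule second_derivative_nonpos_at_max_feasible_direction[OF assms(1) max deriv dQ[of h]])
      (use crit feasible[OF that] in simp_all)
  moreover have "continuous_on UNIV Q"
    unfolding Q_def by (intro continuous_intros)
  moreover have "Q (- h) = Q h" for h
    by (simp add: Q_def sum_negf)
  ultimately have "Q (axis i 1) \<le> 0"
    using even_nonpos_on_open_halfspace_nonpos \<open>n \<noteq> 0\<close> by blast
  then show ?thesis
    by (simp add: Q_def axis_def of_bool_def[symmetric])
qed

section \<open>Domains with \<open>C\<^sup>1\<close> boundary\<close>

lemma norm_C1_domain_normal:
  assumes "C1_domain_with_normal \<Omega> \<nu>" and "p \<in> frontier \<Omega>"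
  shows "norm (\<nu> p) = 1"
proof -
  obtain U g where "p \<in> U" "\<forall>y\<in>U. g y \<noteq> 0" "\<nu> p = (1 / norm (g p)) *\<^sub>R g p"
    using assms unfolding C1_domain_with_normal_def by meson
  then show ?thesis
    by simp
qed

lemma C1_domain_feasible_direction:
  fixes \<Omega> :: "(real^'n) set"
  assumes dom: "C1_domain_with_normal \<Omega> \<nu>" and p: "p \<in> frontier \<Omega>" and h: "h \<bullet> \<nu> p < 0"
  shows "feasible_direction (closure \<Omega>) p h"
proof -
  obtain U \<rho> g where U: "open U" "p \<in> U"
    and der: "\<forall>y\<in>U. (\<rho> has_derivative (\<lambda>h. g y \<bullet> h)) (at y)"
    and "g p \<noteq> 0" and \<Omega>U: "\<Omega> \<inter> U = {y\<in>U. \<rho> y < 0}"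
    and \<nu>: "\<nu> p = (1 / norm (g p)) *\<^sub>R g p"
    using dom p unfolding C1_domain_with_normal_def by meson
  have p_cl: "p \<in> closure \<Omega>"
    using p by (simp add: frontier_def)
  have "\<rho> p \<le> 0"
  proof (rule ccontr)
    assume "\<not> \<rho> p \<le> 0"
    have "continuous_on U \<rho>"
      using der by (meson continuous_at_imp_continuous_on has_derivative_continuous)
    then have "open (\<rho> -` {0<..} \<inter> U)"
      using U by (simp add: continuous_on_open_vimage)
    moreover have "p \<in> (\<rho> -` {0<..} \<inter> U) \<inter> closure \<Omega>"
      using \<open>\<not> \<rho> p \<le> 0\<close> U p_cl by simp
    ultimately obtain y where "y \<in> \<Omega> \<inter> U" "\<rho> y > 0"
      using open_Int_closure_eq_empty by blast
    then show False
      unfolding \<Omega>U by simp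
  qed
  have "g p \<bullet> h < 0"
    using h \<open>g p \<noteq> 0\<close> by (simp add: \<nu> inner_commute divide_less_0_iff)
  moreover have "((\<lambda>s. \<rho> (p + s *\<^sub>R h)) has_real_derivative g p \<bullet> h) (at 0)"
    using der U by (intro has_real_derivative_along_line[where M = UNIV]) auto
  ultimately have "\<exists>d>0. \<forall>s>0. s < d \<longrightarrow> \<rho> (p + (0 + s) *\<^sub>R h) < \<rho> (p + 0 *\<^sub>R h)"
    using DERIV_neg_dec_right by blast
  then obtain d where d: "d > 0" "\<And>s. 0 < s \<Longrightarrow> s < d \<Longrightarrow> \<rho> (p + s *\<^sub>R h) < \<rho> p"
    by auto
  obtain \<delta> where \<delta>: "\<delta> > 0" "\<And>s. 0 \<le> s \<Longrightarrow> s < \<delta> \<Longrightarrow> p + s *\<^sub>R h \<in> U"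
    using feasible_direction_interior[of p U h] U
    unfolding feasible_direction_def interior_open[OF \<open>open U\<close>] by auto
  have "p + s *\<^sub>R h \<in> closure \<Omega>" if "0 \<le> s" "s < min d \<delta>" for s
  proof (cases "s = 0")
    case False
    then have s: "0 < s" "s < d" "s < \<delta>"
      using that by auto
    have "\<rho> (p + s *\<^sub>R h) < 0"
      using d(2)[OF s(1,2)] \<open>\<rho> p \<le> 0\<close> by linarith
    with \<delta>(2)[OF that(1) s(3)] have "p + s *\<^sub>R h \<in> \<Omega> \<inter> U"
      unfolding \<Omega>U by simp
    then show ?thesis
      using closure_subset by blast
  qed (use p_cl in simp)
  then show ?thesis
    unfolding feasible_direction_def using d \<delta> by (intro exI[of _ "min d \<delta>"]) auto
qed

lemma C1_domain_max_critical:
  fixes \<psi> :: "real^'n \<Rightarrow> real"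
  assumes dom: "C1_domain_with_normal \<Omega> \<nu>"
    and x0: "x0 \<in> closure \<Omega>" and max: "\<forall>x\<in>closure \<Omega>. \<psi> x \<le> \<psi> x0"
    and deriv: "\<And>y. y \<in> closure \<Omega> \<Longrightarrow> (\<psi> has_derivative (\<lambda>h. G y \<bullet> h)) (at y within closure \<Omega>)"
    and deriv2: "\<And>j. ((\<lambda>y. G y $ j) has_derivative (\<lambda>h. \<Sum>k\<in>UNIV. h $ k * H j k))
                   (at x0 within closure \<Omega>)"
    and normal: "x0 \<in> frontier (closure \<Omega>) \<Longrightarrow> G x0 \<bullet> \<nu> x0 \<le> 0"
  shows "G x0 = 0" and "H i i \<le> 0"
proof -
  obtain n where n: "norm n = 1" "G x0 \<bullet> n \<le> 0"
    and feasible: "\<And>h. h \<bullet> n < 0 \<Longrightarrow> feasible_direction (closure \<Omega>) x0 h"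
  proof (cases "x0 \<in> interior (closure \<Omega>)")
    case True
    define e :: "real^'n" where "e = axis undefined 1"
    show ?thesis
    proof (rule that[of "if G x0 \<bullet> e \<le> 0 then e else - e"])
      show "norm (if G x0 \<bullet> e \<le> 0 then e else - e) = 1"
        by (simp add: e_def)
    qed (use feasible_direction_interior[OF True] in auto)
  next
    case False
    then have boundary: "x0 \<in> frontier (closure \<Omega>)"
      using x0 by (simp add: frontier_def)
    have "x0 \<in> frontier \<Omega>"
      using x0 False interior_mono[OF closure_subset] unfolding frontier_def by blast
    show ?thesis
      by (rule that[of "\<nu> x0"])
        (use norm_C1_domain_normal[OF dom] C1_domain_feasible_direction[OF dom]
          normal[OF boundary] \<open>x0 \<in> frontier \<Omega>\<close> in auto)
  qed
  show "G x0 = 0"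
    using gradient_eq_0_at_max_feasible_halfspace[OF x0 max deriv[OF x0] n feasible] .
  moreover have "n \<noteq> 0"
    using n by auto
  ultimately show "H i i \<le> 0"
    using hessian_diag_nonpos_at_max_feasible_halfspace[OF x0 max deriv deriv2] feasible by blast
qed

lemma has_derivative_inner_partials:
  fixes F :: "real^'n \<Rightarrow> 'a::real_inner"
  assumes "(F has_derivative (\<lambda>h. \<Sum>j\<in>UNIV. h $ j *\<^sub>R D j)) (at x within M)"
  shows "((\<lambda>y. l \<bullet> F y) has_derivative (\<lambda>h. (\<chi> j. l \<bullet> D j) \<bullet> h)) (at x within M)"
proof -
  have "(\<lambda>h. l \<bullet> (\<Sum>j\<in>UNIV. h $ j *\<^sub>R D j)) = (\<lambda>h. (\<chi> j. l \<bullet> D j) \<bullet> h)"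
    by (simp add: inner_sum_right inner_vec_def mult.commute)
  then show ?thesis
    using has_derivative_inner_right[OF assms, of l] by simp
qed

lemma C1_domain_max_inner_critical:
  fixes F :: "real^'n \<Rightarrow> 'a::real_inner"
  assumes dom: "C1_domain_with_normal \<Omega> \<nu>"
    and x0: "x0 \<in> closure \<Omega>" and max: "\<forall>x\<in>closure \<Omega>. l \<bullet> F x \<le> l \<bullet> F x0"
    and deriv: "\<And>y. y \<in> closure \<Omega> \<Longrightarrow>
                  (F has_derivative (\<lambda>h. \<Sum>j\<in>UNIV. h $ j *\<^sub>R DF y j)) (at y within closure \<Omega>)"
    and deriv2: "\<And>j. ((\<lambda>y. DF y j) has_derivative (\<lambda>h. \<Sum>k\<in>UNIV. h $ k *\<^sub>R D2F j k))
                   (at x0 within closure \<Omega>)"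
    and normal: "x0 \<in> frontier (closure \<Omega>) \<Longrightarrow> (\<chi> j. l \<bullet> DF x0 j) \<bullet> \<nu> x0 \<le> 0"
  shows "l \<bullet> DF x0 j = 0" and "l \<bullet> D2F j j \<le> 0"
proof -
  have deriv2': "((\<lambda>y. (\<chi> j. l \<bullet> DF y j) $ j) has_derivative (\<lambda>h. \<Sum>k\<in>UNIV. h $ k * (l \<bullet> D2F j k)))
      (at x0 within closure \<Omega>)" for j
    using has_derivative_inner_right[OF deriv2, of l j] by (simp add: inner_sum_right)
  note critical = C1_domain_max_critical[OF dom x0 max has_derivative_inner_partials[OF deriv] deriv2' normal]
  show "l \<bullet> DF x0 j = 0"
    using critical(1) by (metis vec_lambda_beta zero_index)
  show "l \<bullet> D2F j j \<le> 0"
    by (rule critical(2))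
qed

section \<open>Projection onto a closed convex set\<close>

lemma infdist_eq_norm_lam_vec:
  fixes W :: "'a::euclidean_space set"
  assumes "closed W" "W \<noteq> {}"
  shows "infdist v W = norm (lam_vec W v)"
  using assms by (simp add: lam_vec_def infdist_eq_setdist setdist_closest_point dist_norm)

lemma lam_vec_inner_le:
  fixes W :: "'a::euclidean_space set"
  assumes "convex W" "closed W" "y \<in> W"
  shows "lam_vec W v \<bullet> y \<le> lam_vec W v \<bullet> closest_point W v"
  using closest_point_dot[OF assms, of v] by (simp add: lam_vec_def inner_diff_right)

lemma lam_vec_inner_diff_le_infdist:
  fixes W :: "'a::euclidean_space set"
  assumes "convex W" "closed W" "W \<noteq> {}"
  shows "lam_vec W v \<bullet> (z - closest_point W v) \<le> norm (lam_vec W v) * infdist z W"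
proof -
  let ?l = "lam_vec W v"
  have "closest_point W z \<in> W"
    using assms closest_point_in_set by blast
  then have "?l \<bullet> (z - closest_point W v) \<le> ?l \<bullet> (z - closest_point W z)"
    using lam_vec_inner_le[OF assms(1,2)] by (simp add: inner_diff_right)
  also have "\<dots> \<le> norm ?l * norm (lam_vec W z)"
    using norm_cauchy_schwarz by (simp add: lam_vec_def)
  finally show ?thesis
    using infdist_eq_norm_lam_vec[OF assms(2,3)] by simp
qed

lemma lam_vec_inner_le_of_infdist_le:
  fixes W :: "'a::euclidean_space set"
  assumes W: "convex W" "closed W" "W \<noteq> {}" and "infdist z W \<le> infdist v W"
  shows "lam_vec W v \<bullet> z \<le> lam_vec W v \<bullet> v"
proof -
  let ?l = "lam_vec W v" and ?\<omega> = "closest_point W v"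
  have "?l \<bullet> (z - ?\<omega>) \<le> norm ?l * infdist z W"
    by (rule lam_vec_inner_diff_le_infdist[OF W])
  also have "\<dots> \<le> norm ?l * norm ?l"
    using assms(4) infdist_eq_norm_lam_vec[OF W(2,3)] by (simp add: mult_left_mono)
  also have "\<dots> = ?l \<bullet> (v - ?\<omega>)"
    by (simp add: lam_vec_def dot_square_norm power2_eq_square)
  finally show ?thesis
    by (simp add: inner_diff_right)
qed

lemma closest_point_in_frontier:
  fixes W :: "'a::euclidean_space set"
  assumes "closed W" "W \<noteq> {}" "v \<notin> W"
  shows "closest_point W v \<in> frontier W"
proof -
  have "closest_point W v \<notin> interior W"
  proof
    assume interior: "closest_point W v \<in> interior W"
    then have hull: "affine hull W = UNIV"
      using affine_hull_nonempty_interior by blast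
    then have "closest_point W v \<in> rel_interior W"
      using interior rel_interior_interior by blast
    then have "v \<in> rel_interior W"
      using closest_point_in_rel_interior[OF assms(1,2), of v] hull by simp
    then have "v \<in> interior W"
      using hull rel_interior_interior by blast
    then show False
      using assms(3) interior_subset by blast
  qed
  then show ?thesis
    using closest_point_in_set[OF assms(1,2)] closure_subset by (auto simp: frontier_def)
qed

lemma sgn_lam_vec_supporting_vector:
  fixes W :: "'a::euclidean_space set"
  assumes "convex W" "closed W" "W \<noteq> {}" "v \<notin> W"
  shows "sgn (lam_vec W v) \<in> supporting_vectors W (closest_point W v)"
proof -
  let ?l = "lam_vec W v" and ?\<omega> = "closest_point W v"
  have "?l \<noteq> 0"
    using assms closest_point_refl by (metis eq_iff_diff_eq_0 lam_vec_def)
  moreover have "sgn ?l \<bullet> \<sigma> \<le> sgn ?l \<bullet> ?\<omega>" if "\<sigma> \<in> W" for \<sigma>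
  proof -
    have "(?l \<bullet> \<sigma>) / norm ?l \<le> (?l \<bullet> ?\<omega>) / norm ?l"
      using lam_vec_inner_le[OF assms(1,2) that] by (rule divide_right_mono) simp
    then show ?thesis
      by (simp add: sgn_div_norm divide_inverse_commute)
  qed
  ultimately show ?thesis
    by (simp add: supporting_vectors_def norm_sgn)
qed

lemma lam_vec_inner_nonpos_of_tangency:
  fixes W :: "'a::euclidean_space set"
  assumes "convex W" "closed W" "W \<noteq> {}" "v \<notin> W"
    and tangency: "\<And>l. l \<in> supporting_vectors W (closest_point W v) \<Longrightarrow> l \<bullet> y \<le> 0"
  shows "lam_vec W v \<bullet> y \<le> 0"
proof -
  have "sgn (lam_vec W v) \<bullet> y \<le> 0"
    using tangency sgn_lam_vec_supporting_vector[OF assms(1-4)] by blast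
  then show ?thesis
    by (cases "lam_vec W v = 0") (auto simp: sgn_div_norm mult_le_0_iff)
qed

section \<open>The maximal distance pair\<close>

lemma exists_not_in_closed_before_endpoint:
  fixes g :: "real \<Rightarrow> 'a::topological_space"
  assumes "continuous_on {a..b} g" "closed W" "t \<in> {a<..b}" "g t \<notin> W"
  shows "\<exists>s\<in>{a<..<b}. g s \<notin> W"
proof (rule ccontr)
  assume "\<not> ?thesis"
  then have "{a<..<b} \<subseteq> {a..b} \<inter> g -` W"
    by auto
  moreover have "closed ({a..b} \<inter> g -` W)"
    using assms(1,2) by (simp add: continuous_closed_preimage)
  ultimately have "closure {a<..<b} \<subseteq> {a..b} \<inter> g -` W"
    by (rule closure_minimal)
  moreover have "a < b" "t \<in> {a..b}"
    using assms(3) by auto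
  ultimately have "g t \<in> W"
    by auto
  then show False
    using assms(4) by simp
qed

lemma weighted_distance_max_before_exit:
  fixes f :: "real \<Rightarrow> 'b::topological_space \<Rightarrow> 'a::euclidean_space"
  assumes M: "compact M"
    and cont: "continuous_on ({0..T} \<times> M) (\<lambda>(t, x). f t x)"
    and W: "closed W" "W \<noteq> {}"
    and init: "\<And>x. x \<in> M \<Longrightarrow> f 0 x \<in> W"
    and leaves: "\<exists>t\<in>{0<..T}. \<exists>x\<in>M. f t x \<notin> W"
  obtains \<tau> x0 where "\<tau> \<in> {0<..<T}" "x0 \<in> M" "max_distance_pair W M T f \<tau> x0"
    and "\<And>x. x \<in> M \<Longrightarrow> infdist (f \<tau> x) W \<le> infdist (f \<tau> x0) W"
    and "\<And>s. s \<in> {0..\<tau>} \<Longrightarrow> exp (- K * s) * infdist (f s x0) W \<le> exp (- K * \<tau>) * infdist (f \<tau> x0) W"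
proof -
  obtain t1 x1 where t1: "t1 \<in> {0<..<T}" and x1: "x1 \<in> M" "f t1 x1 \<notin> W"
  proof -
    obtain t x where t: "t \<in> {0<..T}" and x: "x \<in> M" "f t x \<notin> W"
      using leaves by blast
    from x(1) have "continuous_on {0..T} (\<lambda>s. f s x)"
      by (intro continuous_on_compose2[OF cont, of _ "\<lambda>s. (s, x)", simplified])
        (auto intro!: continuous_on_Pair continuous_on_id continuous_on_const)
    then obtain s where "s \<in> {0<..<T}" "f s x \<notin> W"
      using exists_not_in_closed_before_endpoint[of 0 T "\<lambda>s. f s x", OF _ W(1) t x(2)] by blast
    then show ?thesis
      using that x(1) by blast
  qed
  define F where "F z = exp (- K * fst z) * infdist (f (fst z) (snd z)) W" for z
  have "{0..t1} \<times> M \<subseteq> {0..T} \<times> M"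
    using t1 by auto
  then have "continuous_on ({0..t1} \<times> M) (\<lambda>z. f (fst z) (snd z))"
    using continuous_on_subset[OF cont] by (simp add: case_prod_unfold)
  then have "continuous_on ({0..t1} \<times> M) F"
    unfolding F_def by (intro continuous_intros)
  moreover have "(t1, x1) \<in> {0..t1} \<times> M"
    using t1 x1 by simp
  ultimately obtain z where "z \<in> {0..t1} \<times> M" and max_z: "\<forall>y\<in>{0..t1} \<times> M. F y \<le> F z"
    using continuous_attains_sup[of "{0..t1} \<times> M" F] M compact_Times[of "{0..t1}" M]
    by (metis compact_Icc empty_iff)
  then obtain \<tau> x0 where z: "\<tau> \<in> {0..t1}" "x0 \<in> M"
    and max: "\<And>y. y \<in> {0..t1} \<times> M \<Longrightarrow> F y \<le> F (\<tau>, x0)"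
    by (cases z) auto
  have "0 < F (t1, x1)"
    using infdist_pos_not_in_closed[OF W x1(2)] by (simp add: F_def)
  also have "\<dots> \<le> F (\<tau>, x0)"
    using max t1 x1 by simp
  finally have pos: "infdist (f \<tau> x0) W > 0"
    by (simp add: F_def zero_less_mult_iff)
  then have "\<tau> \<noteq> 0"
    using init[OF z(2)] by auto
  then have \<tau>: "\<tau> \<in> {0<..<T}"
    using z t1 by auto
  have space_max: "infdist (f \<tau> x) W \<le> infdist (f \<tau> x0) W" if "x \<in> M" for x
    using max[of "(\<tau>, x)"] z that by (simp add: F_def)
  then have "max_distance_pair W M T f \<tau> x0"
    unfolding max_distance_pair_def using \<tau> z pos by (auto intro!: cSup_eq_maximum[symmetric])
  moreover have "exp (- K * s) * infdist (f s x0) W \<le> exp (- K * \<tau>) * infdist (f \<tau> x0) W"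
    if "s \<in> {0..\<tau>}" for s
    using max[of "(s, x0)"] z that by (simp add: F_def)
  ultimately show ?thesis
    using that \<tau> z space_max by blast
qed

text \<open>The function \<open>s \<mapsto> \<langle>l, g s - \<omega>\<rangle>\<close> lies below \<open>|l| dist (g s, W)\<close> and touches it at \<open>\<tau>\<close>,
  so after weighting with \<open>exp (- K s)\<close> it inherits the maximum at \<open>\<tau>\<close> from the left.\<close>
lemma lam_vec_inner_derivative_ge_at_left_max:
  fixes g :: "real \<Rightarrow> 'a::euclidean_space"
  assumes W: "convex W" "closed W" "W \<noteq> {}"
    and deriv: "(g has_vector_derivative g') (at \<tau>)"
    and "\<delta> > 0"
    and max: "\<And>s. \<tau> - \<delta> < s \<Longrightarrow> s < \<tau> \<Longrightarrow>
                exp (- K * s) * infdist (g s) W \<le> exp (- K * \<tau>) * infdist (g \<tau>) W"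
  shows "K * (norm (lam_vec W (g \<tau>)))\<^sup>2 \<le> lam_vec W (g \<tau>) \<bullet> g'"
proof (rule ccontr)
  assume small: "\<not> ?thesis"
  define l where "l = lam_vec W (g \<tau>)"
  define \<omega> where "\<omega> = closest_point W (g \<tau>)"
  define b where "b s = exp (- K * s) * (l \<bullet> g s - l \<bullet> \<omega>)" for s
  have l_sq: "l \<bullet> (g \<tau> - \<omega>) = (norm l)\<^sup>2"
    by (simp add: l_def \<omega>_def lam_vec_def power2_norm_eq_inner)
  have "((\<lambda>s. l \<bullet> g s) has_real_derivative l \<bullet> g') (at \<tau>)"
    using deriv unfolding has_vector_derivative_def has_field_derivative_def
    by (auto intro!: derivative_eq_intros simp: fun_eq_iff mult.commute)
  then have "(b has_real_derivative
      exp (- K * \<tau>) * (l \<bullet> g') - K * exp (- K * \<tau>) * (l \<bullet> (g \<tau> - \<omega>))) (at \<tau>)"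
    unfolding b_def by (auto intro!: derivative_eq_intros simp: inner_diff_right algebra_simps)
  moreover have "exp (- K * \<tau>) * (l \<bullet> g') - K * exp (- K * \<tau>) * (l \<bullet> (g \<tau> - \<omega>))
      = exp (- K * \<tau>) * (l \<bullet> g' - K * (norm l)\<^sup>2)"
    unfolding l_sq by (simp add: algebra_simps)
  moreover have "exp (- K * \<tau>) * (l \<bullet> g' - K * (norm l)\<^sup>2) < 0"
    using small by (simp add: l_def mult_pos_neg)
  ultimately obtain d where d: "d > 0" "\<And>h. 0 < h \<Longrightarrow> h < d \<Longrightarrow> b \<tau> < b (\<tau> - h)"
    using DERIV_neg_dec_left by (metis (no_types, lifting))
  define s where "s = \<tau> - min d \<delta> / 2"
  have "b \<tau> < b s"
    using d \<open>\<delta> > 0\<close> by (simp add: s_def)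
  moreover have "b s \<le> b \<tau>"
  proof -
    have "b s \<le> exp (- K * s) * (norm l * infdist (g s) W)"
      unfolding b_def l_def \<omega>_def using lam_vec_inner_diff_le_infdist[OF W]
      by (simp add: inner_diff_right)
    also have "\<dots> \<le> norm l * (exp (- K * \<tau>) * infdist (g \<tau>) W)"
      using max[of s] d \<open>\<delta> > 0\<close> by (simp add: s_def mult.left_commute mult_left_mono)
    also have "\<dots> = b \<tau>"
      using infdist_eq_norm_lam_vec[OF W(2,3)] l_sq
      by (simp add: b_def l_def power2_eq_square inner_diff_right)
    finally show ?thesis .
  qed
  ultimately show False
    by simp
qed

lemma inner_reaction_diffusion_le:
  fixes l :: "'a::real_inner"
  assumes "\<And>j. l \<bullet> D j = 0" "\<And>j. l \<bullet> D2 j j \<le> 0" "l \<bullet> p \<le> 0" "norm (q - p) \<le> C * norm l"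
  shows "l \<bullet> ((\<Sum>j\<in>J. D2 j j) + (\<Sum>j\<in>J. c j *\<^sub>R D j) + q) \<le> C * (norm l)\<^sup>2"
proof -
  have "l \<bullet> q = l \<bullet> p + l \<bullet> (q - p)"
    by (simp add: inner_diff_right)
  also have "\<dots> \<le> 0 + norm l * norm (q - p)"
    using assms(3) norm_cauchy_schwarz[of l "q - p"] by (intro add_mono) auto
  also have "\<dots> \<le> norm l * (C * norm l)"
    using assms(4) by (simp add: mult_left_mono)
  finally have "l \<bullet> q \<le> C * (norm l)\<^sup>2"
    by (simp add: power2_eq_square mult_ac)
  moreover have "l \<bullet> (\<Sum>j\<in>J. D2 j j) \<le> 0"
    using assms(2) by (simp add: inner_sum_right sum_nonpos)
  ultimately show ?thesis
    using assms(1) by (simp add: inner_add_right inner_sum_right)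
qed

theorem theorem2:
  fixes \<Omega> M :: "(real^'n) set" and \<nu> :: "real^'n \<Rightarrow> real^'n" and T :: real
    and \<phi> :: "real \<Rightarrow> real^'n \<Rightarrow> real^'m \<Rightarrow> real^'m"
    and \<zeta> :: "'n \<Rightarrow> real \<Rightarrow> real^'n \<Rightarrow> real"
    and f ft :: "real \<Rightarrow> real^'n \<Rightarrow> real^'m"
    and Df :: "real \<Rightarrow> real^'n \<Rightarrow> 'n \<Rightarrow> real^'m"
    and D2f :: "real \<Rightarrow> real^'n \<Rightarrow> 'n \<Rightarrow> 'n \<Rightarrow> real^'m"
    and W :: "(real^'m) set"
  assumes dom: "C1_domain_with_normal \<Omega> \<nu>"
    and M_def: "M = closure \<Omega>"
    and T_pos: "T > 0"
    and phi_lip: "\<And>U. compact U \<Longrightarrow> \<exists>C>0. \<forall>t\<in>{0<..<T}. \<forall>x\<in>M. \<forall>v1\<in>U. \<forall>v2\<in>U.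
                     norm (\<phi> t x v1 - \<phi> t x v2) \<le> C * norm (v1 - v2)"
    and f_cont: "continuous_on ({0..T} \<times> M) (\<lambda>(t, x). f t x)"
    and ft_deriv: "\<And>t x. t \<in> {0<..<T} \<Longrightarrow> x \<in> M \<Longrightarrow>
                     ((\<lambda>s. f s x) has_vector_derivative ft t x) (at t)"
    and ft_cont: "continuous_on ({0<..<T} \<times> M) (\<lambda>(t, x). ft t x)"
    and Df_deriv: "\<And>t x. t \<in> {0<..<T} \<Longrightarrow> x \<in> M \<Longrightarrow>
                     (f t has_derivative (\<lambda>h. \<Sum>j\<in>UNIV. h $ j *\<^sub>R Df t x j)) (at x within M)"
    and D2f_deriv: "\<And>t x j. t \<in> {0<..<T} \<Longrightarrow> x \<in> M \<Longrightarrow>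
                     ((\<lambda>y. Df t y j) has_derivative (\<lambda>h. \<Sum>k\<in>UNIV. h $ k *\<^sub>R D2f t x j k)) (at x within M)"
    and Df_cont: "\<And>j. continuous_on ({0<..<T} \<times> M) (\<lambda>(t, x). Df t x j)"
    and D2f_cont: "\<And>j k. continuous_on ({0<..<T} \<times> M) (\<lambda>(t, x). D2f t x j k)"
    and pde: "\<And>t x. t \<in> {0<..<T} \<Longrightarrow> x \<in> M \<Longrightarrow>
                ft t x = (\<Sum>j\<in>UNIV. D2f t x j j) + (\<Sum>j\<in>UNIV. \<zeta> j t x *\<^sub>R Df t x j) + \<phi> t x (f t x)"
    and W_ne: "W \<noteq> {}" and W_closed: "closed W" and W_convex: "convex W"
    and init: "\<And>x. x \<in> M \<Longrightarrow> f 0 x \<in> W"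
    and tangency: "\<And>t x \<omega> l. t \<in> {0<..<T} \<Longrightarrow> x \<in> M \<Longrightarrow> \<omega> \<in> frontier W \<Longrightarrow>
                     l \<in> supporting_vectors W \<omega> \<Longrightarrow> l \<bullet> \<phi> t x \<omega> \<le> 0"
    and leaves: "\<exists>t\<in>{0<..T}. \<exists>x\<in>M. f t x \<notin> W"
  shows "\<exists>t0\<in>{0<..<T}. \<exists>x0\<in>frontier M. max_distance_pair W M T f t0 x0 \<and>
           (\<exists>D. ((\<lambda>x. lam_vec W (f t0 x0) \<bullet> f t0 x) has_derivative D) (at x0 within M)
                 \<and> D (\<nu> x0) > 0)"
proof (rule ccontr)
  assume no_pair: "\<not> ?thesis"
  have "compact M"
    using dom M_def by (simp add: C1_domain_with_normal_def compact_closure)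
  define V where "V = (\<lambda>(t, x). f t x) ` ({0..T} \<times> M)"
  have "compact V"
    unfolding V_def using f_cont \<open>compact M\<close> by (intro compact_continuous_image compact_Times) auto
  then have "compact (V \<union> closest_point W ` V)"
    using W_ne W_closed W_convex by (intro compact_Un compact_continuous_image continuous_on_closest_point)
  then obtain C where lip: "\<forall>t\<in>{0<..<T}. \<forall>x\<in>M. \<forall>v1\<in>V \<union> closest_point W ` V.
      \<forall>v2\<in>V \<union> closest_point W ` V. norm (\<phi> t x v1 - \<phi> t x v2) \<le> C * norm (v1 - v2)"
    using phi_lip by blast
  obtain \<tau> x0 where \<tau>: "\<tau> \<in> {0<..<T}" and x0: "x0 \<in> M" and pair: "max_distance_pair W M T f \<tau> x0"
    and space_max: "\<And>x. x \<in> M \<Longrightarrow> infdist (f \<tau> x) W \<le> infdist (f \<tau> x0) W"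
    and time_max: "\<And>s. s \<in> {0..\<tau>} \<Longrightarrow>
      exp (- (C + 1) * s) * infdist (f s x0) W \<le> exp (- (C + 1) * \<tau>) * infdist (f \<tau> x0) W"
    using weighted_distance_max_before_exit[OF \<open>compact M\<close> f_cont W_closed W_ne init leaves] by metis
  define l where "l = lam_vec W (f \<tau> x0)"
  define \<omega> where "\<omega> = closest_point W (f \<tau> x0)"
  have "infdist (f \<tau> x0) W > 0"
    using pair by (simp add: max_distance_pair_def)
  then have "f \<tau> x0 \<notin> W" and "0 < norm l"
    by (auto simp: l_def simp flip: infdist_eq_norm_lam_vec[OF W_closed W_ne])
  have "x0 \<in> frontier M \<Longrightarrow> (\<chi> j. l \<bullet> Df \<tau> x0 j) \<bullet> \<nu> x0 \<le> 0"
    using no_pair \<tau> pair has_derivative_inner_partials[OF Df_deriv[OF \<tau> x0]] l_def by force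
  then have critical: "l \<bullet> Df \<tau> x0 j = 0" "l \<bullet> D2f \<tau> x0 j j \<le> 0" for j
    using C1_domain_max_inner_critical[OF dom, of x0 l "f \<tau>" "Df \<tau>" "D2f \<tau> x0"]
      x0 Df_deriv[OF \<tau>] D2f_deriv[OF \<tau> x0] space_max
      lam_vec_inner_le_of_infdist_le[OF W_convex W_closed W_ne]
    unfolding M_def l_def by auto
  have "\<omega> \<in> frontier W"
    unfolding \<omega>_def using closest_point_in_frontier[OF W_closed W_ne \<open>f \<tau> x0 \<notin> W\<close>] .
  then have tangent: "l \<bullet> \<phi> \<tau> x0 \<omega> \<le> 0"
    unfolding l_def \<omega>_def using tangency[OF \<tau> x0]
    by (intro lam_vec_inner_nonpos_of_tangency[OF W_convex W_closed W_ne \<open>f \<tau> x0 \<notin> W\<close>])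
  have "f \<tau> x0 \<in> V"
    unfolding V_def using \<tau> x0 by (intro image_eqI[of _ _ "(\<tau>, x0)"]) auto
  then have "norm (\<phi> \<tau> x0 (f \<tau> x0) - \<phi> \<tau> x0 \<omega>) \<le> C * norm l"
    using lip \<tau> x0 unfolding l_def \<omega>_def lam_vec_def by blast
  then have "l \<bullet> ft \<tau> x0 \<le> C * (norm l)\<^sup>2"
    unfolding pde[OF \<tau> x0] by (rule inner_reaction_diffusion_le[OF critical tangent])
  moreover have "(C + 1) * (norm l)\<^sup>2 \<le> l \<bullet> ft \<tau> x0"
    unfolding l_def
    by (rule lam_vec_inner_derivative_ge_at_left_max[OF W_convex W_closed W_ne ft_deriv[OF \<tau> x0], of \<tau>])
      (use time_max \<tau> in auto)
  moreover have "0 < (norm l)\<^sup>2"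
    using \<open>0 < norm l\<close> by simp
  ultimately show False
    by (simp add: distrib_right)
qed

end
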